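(* For every online scheduling algorithm there exists a feasible job stream (with speed functions $f_j(t)=t-r_j$) on which the algorithm misses the due date of at least one job, i.e., some job $j$ has completion time $C_j>d_j$.
   Context: Jobs $j$ have release time $r_j$, due date $d_j>r_j$, work $w_j>0$, and speed function $f_j(t)=t-r_j$ for $t\ge r_j$. A single processor runs at most one job at a time, preemption is allowed, and running job $j$ during a set of times $S$ completes $\int_S f_j(t)\,dt$ units of its work; $C_j$ is the time at which job $j$'s work $w_j$ is completed. A job stream is feasible if there exists a schedule in which every job runs only within $[r_j,d_j]$ and completes by $d_j$. In the online setting, job $j$ (together with $w_j$ and $d_j$) becomes known to the algorithm only at time $r_j$, and the algorithm's decisions up to time $t$ may depend only on jobs released by time $t$. *)

theory Defs
  imports "HOL-Analysis.Analysis" "HOL-Library.Extended_Real"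
begin

type_synonym job = "real \<times> real \<times> real"

definition rel :: "job \<Rightarrow> real" where "rel j = fst j"
definition due :: "job \<Rightarrow> real" where "due j = fst (snd j)"
definition wk  :: "job \<Rightarrow> real" where "wk j = snd (snd j)"

text \<open>A job stream: a finite list of jobs with d > r and w > 0, listed in
  nondecreasing order of release time (so the jobs released by any time t
  form a prefix of the list).\<close>
definition job_stream :: "job list \<Rightarrow> bool" where
  "job_stream J \<longleftrightarrow> sorted (map rel J) \<and> (\<forall>j\<in>set J. rel j < due j \<and> 0 < wk j)"

text \<open>A schedule says, at each time, which job (index into the stream) runs,
  if any; so at most one job runs at a time and preemption is allowed.\<close>
type_synonym schedule = "real \<Rightarrow> nat option"

definition work :: "schedule \<Rightarrow> job list \<Rightarrow> nat \<Rightarrow> real \<Rightarrow> real" where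
  "work s J i t = integral {rel (J!i)..t}
      (\<lambda>\<tau>. if s \<tau> = Some i then \<tau> - rel (J!i) else 0)"

text \<open>Completion time C_i (infinity if the job is never completed).\<close>
definition completion :: "schedule \<Rightarrow> job list \<Rightarrow> nat \<Rightarrow> ereal" where
  "completion s J i = Inf (ereal ` {t. rel (J!i) \<le> t \<and> wk (J!i) \<le> work s J i t})"

definition feasible :: "job list \<Rightarrow> bool" where
  "feasible J \<longleftrightarrow> (\<exists>s::schedule.
      (\<forall>\<tau> i. s \<tau> = Some i \<longrightarrow> i < length J \<and> rel (J!i) \<le> \<tau> \<and> \<tau> \<le> due (J!i)) \<and>
      (\<forall>i<length J. completion s J i \<le> ereal (due (J!i))))"

definition online :: "(job list \<Rightarrow> schedule) \<Rightarrow> bool" where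
  "online A \<longleftrightarrow> (\<forall>J J' t. job_stream J \<longrightarrow> job_stream J' \<longrightarrow>
      takeWhile (\<lambda>j. rel j \<le> t) J = takeWhile (\<lambda>j. rel j \<le> t) J' \<longrightarrow>
      (\<forall>\<tau>\<le>t. A J \<tau> = A J' \<tau>))"

end

(*
  Two job streams share the jobs (0, 3, 3/2) and (1, 2, 1/8) and differ only in a third
  job released at time 3/2 or later, so an online algorithm behaves identically on both
  before time 3/2.  If the third job is (3/2, 2, 1/8), it can only be completed by running
  it almost all of [3/2, 2]; the job (1, 2, 1/8) must then run almost all of [1, 3/2].
  If instead the third job is (2, 3, 1/2), it must run almost all of [2, 3], so when
  [1, 3/2] was spent on the second job, the first job runs only during [0, 1] and
  [3/2, 2] and receives at most 1/2 + 7/8 < 3/2 units of work.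
  The key estimate is that a job released at r receives at most (m - r)^2/2 units of work
  before time m, with equality only if it runs almost everywhere on [r, m].
*)

theory Submission
  imports Defs
begin

definition rate :: "schedule \<Rightarrow> job list \<Rightarrow> nat \<Rightarrow> real \<Rightarrow> real" where
  "rate s J i = (\<lambda>\<tau>. if s \<tau> = Some i then \<tau> - rel (J!i) else 0)"

lemma work_eq_integral_rate: "work s J i t = integral {rel (J!i)..t} (rate s J i)"
  by (simp add: work_def rate_def)

definition meets_deadlines :: "schedule \<Rightarrow> job list \<Rightarrow> bool" where
  "meets_deadlines s J \<longleftrightarrow> (\<forall>i<length J. completion s J i \<le> ereal (due (J!i)))"

lemma not_meets_deadlines_iff:
  "\<not> meets_deadlines s J \<longleftrightarrow> (\<exists>i<length J. completion s J i > ereal (due (J!i)))"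
  by (auto simp: meets_deadlines_def not_le)

section \<open>Integrals of the speed function\<close>

lemma negligible_nonzero_if_integral_eq_0:
  fixes h :: "real \<Rightarrow> real"
  assumes hi: "h integrable_on S" and nn: "\<And>x. x \<in> S \<Longrightarrow> 0 \<le> h x" and z: "integral S h = 0"
  shows "negligible {x\<in>S. h x \<noteq> 0}"
proof -
  have af: "h absolutely_integrable_on S"
    using nn by (intro absolutely_integrable_onI hi integrable_eq[OF hi]) simp
  then have "integral S h = set_lebesgue_integral lebesgue S h"
    by (intro set_lebesgue_integral_eq_integral(2)[symmetric])
  also have "\<dots> = 0 \<longleftrightarrow> (AE x in lebesgue. indicator S x *\<^sub>R h x = 0)"
    unfolding set_lebesgue_integral_def
  proof (rule integral_nonneg_eq_0_iff_AE)
    show "integrable lebesgue (\<lambda>x. indicat_real S x *\<^sub>R h x)"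
      by (metis af set_integrable_def)
  qed (use nn in \<open>auto simp: indicator_def\<close>)
  finally have "AE x in lebesgue. indicator S x *\<^sub>R h x = 0"
    using z by simp
  then obtain N where N: "N \<in> null_sets lebesgue" "{x. indicator S x *\<^sub>R h x \<noteq> 0} \<subseteq> N"
    by (auto simp: eventually_ae_filter)
  have "{x\<in>S. h x \<noteq> 0} \<subseteq> N"
    using N(2) by (auto simp: indicator_def)
  then show ?thesis
    using N(1) negligible_iff_null_sets negligible_subset by blast
qed

lemma integral_diff_const:
  fixes a b c :: real
  assumes "a \<le> b"
  shows "integral {a..b} (\<lambda>x. x - c) = ((b - c)^2 - (a - c)^2) / 2"
proof -
  have "((\<lambda>x. x - c) has_integral ((\<lambda>x. (x - c)^2/2) b - (\<lambda>x. (x - c)^2/2) a)) {a..b}"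
    by (rule fundamental_theorem_of_calculus[OF assms])
      (auto intro!: derivative_eq_intros
        simp: has_real_derivative_iff_has_vector_derivative[symmetric])
  then show ?thesis
    by (simp add: integral_unique diff_divide_distrib)
qed

lemma integrable_diff_const: "(\<lambda>x::real. x - c) integrable_on {a..b}"
  by (intro integrable_continuous_interval continuous_intros)

lemma integral_running_speed_le:
  fixes P :: "real \<Rightarrow> bool"
  assumes "a \<le> t" and "(\<lambda>\<tau>. if P \<tau> then \<tau> - a else 0) integrable_on {a..t}"
  shows "integral {a..t} (\<lambda>\<tau>. if P \<tau> then \<tau> - a else 0) \<le> (t - a)^2 / 2"
proof -
  have "integral {a..t} (\<lambda>\<tau>. if P \<tau> then \<tau> - a else 0) \<le> integral {a..t} (\<lambda>\<tau>. \<tau> - a)"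
    by (rule integral_le[OF assms(2) integrable_diff_const]) auto
  then show ?thesis
    using integral_diff_const[OF assms(1), of a] by simp
qed

lemma negligible_not_running_if_integral_running_speed_ge:
  fixes P :: "real \<Rightarrow> bool"
  assumes fi: "(\<lambda>\<tau>. if P \<tau> then \<tau> - a else 0) integrable_on {a..m}"
    and full: "(m - a)^2 / 2 \<le> integral {a..m} (\<lambda>\<tau>. if P \<tau> then \<tau> - a else 0)"
  shows "negligible {\<tau>\<in>{a..m}. \<not> P \<tau>}"
proof (cases "a \<le> m")
  case True
  define h where "h = (\<lambda>\<tau>. if P \<tau> then 0 else \<tau> - a)"
  have h_diff: "h = (\<lambda>\<tau>. (\<tau> - a) - (if P \<tau> then \<tau> - a else 0))"
    by (auto simp: h_def)
  have hi: "h integrable_on {a..m}"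
    unfolding h_diff by (intro integrable_diff integrable_diff_const fi)
  have hnn: "\<And>x. x \<in> {a..m} \<Longrightarrow> 0 \<le> h x"
    by (auto simp: h_def)
  have "integral {a..m} h = (m - a)^2 / 2 - integral {a..m} (\<lambda>\<tau>. if P \<tau> then \<tau> - a else 0)"
    unfolding h_diff using integral_diff[OF integrable_diff_const fi] integral_diff_const[OF True]
    by simp
  with full integral_nonneg[OF hi hnn] have "integral {a..m} h = 0"
    by linarith
  then have "negligible {x\<in>{a..m}. h x \<noteq> 0}"
    using negligible_nonzero_if_integral_eq_0[OF hi hnn] by blast
  moreover have "{\<tau>\<in>{a..m}. \<not> P \<tau>} \<subseteq> insert a {x\<in>{a..m}. h x \<noteq> 0}"
    by (auto simp: h_def)
  ultimately show ?thesis
    by (rule negligible_subset[OF negligible_insert[THEN iffD2]])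
qed simp

section \<open>Work and completion of a single job\<close>

lemma integrable_rate_if_work_pos:
  assumes "0 < work s J i t"
  shows "rate s J i integrable_on {rel (J!i)..t}"
  using assms not_integrable_integral by (fastforce simp: work_eq_integral_rate)

lemma Inf_ereal_le_attained:
  fixes S :: "real set"
  assumes Inf_le: "Inf (ereal ` S) \<le> ereal d" and "t1 \<in> S" and "S \<subseteq> {r..}"
    and closed: "closed (S \<inter> {..t1})"
  obtains t where "t \<in> S" "t \<le> d"
proof -
  define T where "T = S \<inter> {..t1}"
  have "bdd_below T"
    using \<open>S \<subseteq> {r..}\<close> by (auto simp: T_def bdd_below_def)
  moreover have "Inf T \<in> T"
    using closed_contains_Inf[of T] closed \<open>t1 \<in> S\<close> \<open>bdd_below T\<close> by (auto simp: T_def)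
  ultimately have "ereal (Inf T) \<le> ereal t" if "t \<in> S" for t
    using that cInf_lower[of t T] by (cases "t \<le> t1") (auto simp: T_def)
  then have "ereal (Inf T) \<le> Inf (ereal ` S)"
    by (auto intro: Inf_greatest)
  with Inf_le have "Inf T \<le> d"
    by (meson ereal_less_eq(3) order_trans)
  with \<open>Inf T \<in> T\<close> show thesis
    using that by (auto simp: T_def)
qed

text \<open>The work done is continuous in time once it is positive, so the infimum defining
  the completion time is attained.\<close>

lemma completion_le_obtains_work:
  assumes c: "completion s J i \<le> ereal d" and w: "0 < wk (J!i)"
  obtains t where "rel (J!i) \<le> t" "t \<le> d" "wk (J!i) \<le> work s J i t"
proof -
  define r where "r = rel (J!i)"
  define S where "S = {t. r \<le> t \<and> wk (J!i) \<le> work s J i t}"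
  have Inf_le: "Inf (ereal ` S) \<le> ereal d"
    using c by (simp add: completion_def S_def r_def)
  have "S \<noteq> {}"
  proof
    assume "S = {}"
    with Inf_le show False
      by (simp add: top_ereal_def)
  qed
  then obtain t1 where t1: "t1 \<in> S"
    by blast
  then have int: "rate s J i integrable_on {r..t1}"
    using w by (intro integrable_rate_if_work_pos[of s J i t1, folded r_def]) (auto simp: S_def)
  have "S \<inter> {..t1} = {t\<in>{r..t1}. wk (J!i) \<le> integral {r..t} (rate s J i)}"
    by (auto simp: S_def r_def work_eq_integral_rate)
  moreover have "closed {t\<in>{r..t1}. wk (J!i) \<le> integral {r..t} (rate s J i)}"
    by (intro continuous_on_closed_Collect_le continuous_on_const
        indefinite_integral_continuous_1[OF int] closed_atLeastAtMost)
  ultimately obtain t where "t \<in> S" "t \<le> d"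
    using Inf_ereal_le_attained[OF Inf_le t1, of r] by (auto simp: S_def)
  then show thesis
    using that by (auto simp: S_def r_def)
qed

lemma completion_le_if_runs_on:
  assumes N: "negligible N"
    and runs: "\<And>\<tau>. \<tau> \<notin> N \<Longrightarrow> s \<tau> = Some i \<longleftrightarrow> p \<le> \<tau> \<and> \<tau> \<le> q"
    and "rel (J!i) \<le> p" "p \<le> q"
    and "wk (J!i) \<le> ((q - rel (J!i))^2 - (p - rel (J!i))^2) / 2"
  shows "completion s J i \<le> ereal q"
proof -
  have "work s J i q = integral {rel (J!i)..q} (\<lambda>\<tau>. if \<tau> \<in> {p..q} then \<tau> - rel (J!i) else 0)"
    unfolding work_def by (rule integral_spike[OF N]) (use runs in auto)
  also have "\<dots> = integral {p..q} (\<lambda>\<tau>. \<tau> - rel (J!i))"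
    unfolding integral_restrict_Int using assms by (simp add: Int_atLeastAtMost max_def min_def)
  also have "\<dots> = ((q - rel (J!i))^2 - (p - rel (J!i))^2) / 2"
    using assms integral_diff_const by blast
  finally have "ereal q \<in> ereal ` {t. rel (J!i) \<le> t \<and> wk (J!i) \<le> work s J i t}"
    using assms by auto
  then show ?thesis
    unfolding completion_def by (rule Inf_lower)
qed

lemma runs_ae_if_completion_tight:
  assumes c: "completion s J i \<le> ereal b" and w: "0 < wk (J!i)"
    and m: "rel (J!i) \<le> m" and tight: "(m - rel (J!i))^2 / 2 \<le> wk (J!i)"
    and idle: "negligible {\<tau>\<in>{m<..b}. s \<tau> = Some i}"
  shows "negligible {\<tau>\<in>{rel (J!i)..m}. s \<tau> \<noteq> Some i}"
proof -
  define r where "r = rel (J!i)"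
  obtain t where t: "r \<le> t" "t \<le> b" and completed: "wk (J!i) \<le> integral {r..t} (rate s J i)"
    using completion_le_obtains_work[OF c w] unfolding r_def work_eq_integral_rate by blast
  have "0 < work s J i t"
    using w completed unfolding work_eq_integral_rate r_def by linarith
  then have int: "rate s J i integrable_on {r..t}"
    unfolding r_def by (rule integrable_rate_if_work_pos)
  have rate_eq: "rate s J i = (\<lambda>\<tau>. if s \<tau> = Some i then \<tau> - r else 0)"
    by (auto simp: rate_def r_def)
  have "m \<le> t"
  proof (rule ccontr)
    assume "\<not> m \<le> t"
    then have "(t - r)^2 / 2 < (m - r)^2 / 2"
      using t(1) by (simp add: power_strict_mono)
    moreover have "integral {r..t} (rate s J i) \<le> (t - r)^2 / 2"
      using integral_running_speed_le[OF t(1)] int by (simp add: rate_eq)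
    ultimately show False
      using tight completed by (simp add: r_def)
  qed
  have int_m: "rate s J i integrable_on {r..m}"
    by (rule integrable_subinterval_real[OF int]) (use \<open>m \<le> t\<close> in auto)
  have "integral {m..t} (rate s J i) = integral {m..t} (\<lambda>_. 0)"
    by (rule integral_spike[of "insert m {\<tau>\<in>{m<..b}. s \<tau> = Some i}"])
      (use idle t in \<open>auto simp: rate_def\<close>)
  moreover have "integral {r..m} (rate s J i) + integral {m..t} (rate s J i) = integral {r..t} (rate s J i)"
    by (rule Henstock_Kurzweil_Integration.integral_combine) (use \<open>m \<le> t\<close> m int in \<open>auto simp: r_def\<close>)
  ultimately have "(m - r)^2 / 2 \<le> integral {r..m} (rate s J i)"
    using tight completed by (simp add: r_def)
  with int_m show ?thesis
    unfolding rate_eq r_def by (rule negligible_not_running_if_integral_running_speed_ge)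
qed

lemma work_le_if_runs_within:
  assumes "t \<le> b" and N: "negligible N"
    and within: "\<And>\<tau>. rel (J!i) \<le> \<tau> \<Longrightarrow> \<tau> \<le> b \<Longrightarrow> s \<tau> = Some i \<Longrightarrow> \<tau> \<in> U \<union> N"
    and gi: "(\<lambda>\<tau>. if \<tau> \<in> U then \<tau> - rel (J!i) else 0) integrable_on {rel (J!i)..b}"
  shows "work s J i t \<le> integral {rel (J!i)..b} (\<lambda>\<tau>. if \<tau> \<in> U then \<tau> - rel (J!i) else 0)"
    (is "_ \<le> integral {?r..b} ?g")
proof -
  have gnn: "0 \<le> ?g \<tau>" if "?r \<le> \<tau>" for \<tau>
    using that by simp
  have gi_t: "?g integrable_on {?r..t}"
    by (rule integrable_subinterval_real[OF gi]) (use \<open>t \<le> b\<close> in auto)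
  have "work s J i t \<le> integral {?r..t} ?g"
  proof (cases "rate s J i integrable_on {?r..t}")
    case True
    define f where "f = (\<lambda>\<tau>. if \<tau> \<in> N then 0 else rate s J i \<tau>)"
    have "work s J i t = integral {?r..t} f"
      unfolding work_eq_integral_rate f_def by (rule integral_spike[OF N]) auto
    also have "\<dots> \<le> integral {?r..t} ?g"
    proof (rule integral_le)
      show "f integrable_on {?r..t}"
        unfolding f_def by (rule integrable_spike[OF True N]) auto
      show "?g integrable_on {?r..t}"
        by (rule gi_t)
      show "f x \<le> ?g x" if "x \<in> {?r..t}" for x
        using within[of x] that \<open>t \<le> b\<close> by (auto simp: f_def rate_def)
    qed
    finally show ?thesis .
  next
    case False
    have "0 \<le> integral {?r..t} ?g"
      by (rule integral_nonneg[OF gi_t]) simp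
    with False show ?thesis
      by (simp add: work_eq_integral_rate not_integrable_integral)
  qed
  also have "\<dots> \<le> integral {?r..b} ?g"
    by (cases "?r \<le> t")
      (use gi gnn \<open>t \<le> b\<close> in \<open>auto intro!: integral_subset_le integral_nonneg
        intro: integrable_subinterval_real\<close>)
  finally show ?thesis .
qed

section \<open>The adversary\<close>

definition J_urgent :: "job list" where
  "J_urgent = [(0, 3, 3/2), (1, 2, 1/8), (3/2, 2, 1/8)]"

definition J_late :: "job list" where
  "J_late = [(0, 3, 3/2), (1, 2, 1/8), (2, 3, 1/2)]"

lemma job_stream_J_urgent: "job_stream J_urgent"
  by (simp add: J_urgent_def job_stream_def rel_def due_def wk_def)

lemma job_stream_J_late: "job_stream J_late"
  by (simp add: J_late_def job_stream_def rel_def due_def wk_def)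

lemma less_3_cases:
  fixes i :: nat
  assumes "i < 3"
  obtains "i = 0" | "i = 1" | "i = 2"
  using assms by linarith

lemma feasible_J_urgent: "feasible J_urgent"
proof -
  define s :: schedule where "s = (\<lambda>\<tau>. if 3/2 \<le> \<tau> \<and> \<tau> \<le> 2 then Some 2
    else if 1 \<le> \<tau> \<and> \<tau> \<le> 3/2 then Some 1 else if 2 \<le> \<tau> \<and> \<tau> \<le> 3 then Some 0 else None)"
  have "completion s J_urgent i \<le> ereal (due (J_urgent!i))" if "i < 3" for i
    using that
  proof (cases rule: less_3_cases)
    case 1
    have "completion s J_urgent 0 \<le> ereal 3"
      by (rule completion_le_if_runs_on[where N="{2}" and p=2])
        (auto simp: s_def J_urgent_def rel_def wk_def power2_eq_square)
    then show ?thesis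
      using 1 by (simp add: J_urgent_def due_def)
  next
    case 2
    have "completion s J_urgent 1 \<le> ereal (3/2)"
      by (rule completion_le_if_runs_on[where N="{3/2}" and p=1])
        (auto simp: s_def J_urgent_def rel_def wk_def power2_eq_square)
    then show ?thesis
      using 2 by (simp add: J_urgent_def due_def order_trans)
  next
    case 3
    have "completion s J_urgent 2 \<le> ereal 2"
      by (rule completion_le_if_runs_on[where N="{}" and p="3/2"])
        (auto simp: s_def J_urgent_def rel_def wk_def power2_eq_square)
    then show ?thesis
      using 3 by (simp add: J_urgent_def due_def)
  qed
  moreover have "\<forall>\<tau> i. s \<tau> = Some i \<longrightarrow> i < length J_urgent \<and> rel (J_urgent!i) \<le> \<tau> \<and> \<tau> \<le> due (J_urgent!i)"
    by (auto simp: s_def J_urgent_def rel_def due_def split: if_splits)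
  moreover have "length J_urgent = 3"
    by (simp add: J_urgent_def)
  ultimately show ?thesis
    unfolding feasible_def by auto
qed

lemma feasible_J_late: "feasible J_late"
proof -
  define s :: schedule where "s = (\<lambda>\<tau>. if 2 \<le> \<tau> \<and> \<tau> \<le> 3 then Some 2
    else if 9/5 \<le> \<tau> \<and> \<tau> \<le> 2 then Some 1 else if 0 \<le> \<tau> \<and> \<tau> \<le> 9/5 then Some 0 else None)"
  have "completion s J_late i \<le> ereal (due (J_late!i))" if "i < 3" for i
    using that
  proof (cases rule: less_3_cases)
    case 1
    have "completion s J_late 0 \<le> ereal (9/5)"
      by (rule completion_le_if_runs_on[where N="{9/5}" and p=0])
        (auto simp: s_def J_late_def rel_def wk_def power2_eq_square)
    then show ?thesis
      using 1 by (simp add: J_late_def due_def order_trans)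
  next
    case 2
    have "completion s J_late 1 \<le> ereal 2"
      by (rule completion_le_if_runs_on[where N="{2}" and p="9/5"])
        (auto simp: s_def J_late_def rel_def wk_def power2_eq_square)
    then show ?thesis
      using 2 by (simp add: J_late_def due_def)
  next
    case 3
    have "completion s J_late 2 \<le> ereal 3"
      by (rule completion_le_if_runs_on[where N="{}" and p=2])
        (auto simp: s_def J_late_def rel_def wk_def power2_eq_square)
    then show ?thesis
      using 3 by (simp add: J_late_def due_def)
  qed
  moreover have "\<forall>\<tau> i. s \<tau> = Some i \<longrightarrow> i < length J_late \<and> rel (J_late!i) \<le> \<tau> \<and> \<tau> \<le> due (J_late!i)"
    by (auto simp: s_def J_late_def rel_def due_def split: if_splits)
  moreover have "length J_late = 3"
    by (simp add: J_late_def)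
  ultimately show ?thesis
    unfolding feasible_def by auto
qed

lemma takeWhile_J_late_eq_J_urgent:
  assumes "t < 3/2"
  shows "takeWhile (\<lambda>j. rel j \<le> t) J_late = takeWhile (\<lambda>j. rel j \<le> t) J_urgent"
  using assms by (simp add: J_late_def J_urgent_def rel_def)

lemma meets_deadlines_J_urgent_runs_job1:
  assumes "meets_deadlines s J_urgent"
  shows "negligible {\<tau>\<in>{1..3/2}. s \<tau> \<noteq> Some 1}"
proof -
  have due: "completion s J_urgent i \<le> ereal (due (J_urgent!i))" if "i < 3" for i
    using assms that by (simp add: meets_deadlines_def J_urgent_def)
  have "negligible {\<tau>\<in>{3/2..2}. s \<tau> \<noteq> Some 2}"
    using runs_ae_if_completion_tight[OF due[of 2], of 2]
    by (simp add: J_urgent_def rel_def due_def wk_def power2_eq_square)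
  then have "negligible {\<tau>\<in>{3/2<..2}. s \<tau> = Some 1}"
    by (rule negligible_subset) auto
  then show ?thesis
    using runs_ae_if_completion_tight[OF due[of 1], of "3/2"]
    by (simp add: J_urgent_def rel_def due_def wk_def power2_eq_square)
qed

lemma meets_deadlines_J_late_idles_job1:
  assumes "meets_deadlines s J_late"
  shows "\<not> negligible {\<tau>\<in>{1..3/2}. s \<tau> \<noteq> Some 1}"
proof
  assume job1: "negligible {\<tau>\<in>{1..3/2}. s \<tau> \<noteq> Some 1}"
  have due: "completion s J_late i \<le> ereal (due (J_late!i))" if "i < 3" for i
    using assms that by (simp add: meets_deadlines_def J_late_def)
  have job2: "negligible {\<tau>\<in>{2..3}. s \<tau> \<noteq> Some 2}"
    using runs_ae_if_completion_tight[OF due[of 2], of 3]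
    by (simp add: J_late_def rel_def due_def wk_def)
  obtain t where "t \<le> 3" and completed: "3/2 \<le> work s J_late 0 t"
    using completion_le_obtains_work[OF due[of 0]]
    by (auto simp: J_late_def rel_def due_def wk_def)
  define g where "g = (\<lambda>\<tau>::real. if \<tau> \<in> {0..1} \<union> {3/2..2} then \<tau> else 0)"
  have g_sum: "g = (\<lambda>\<tau>. (if \<tau> \<in> {0..1} then \<tau> else 0) + (if \<tau> \<in> {3/2..2} then \<tau> else 0))"
    by (auto simp: g_def fun_eq_iff)
  have restrict_int: "(\<lambda>\<tau>::real. if \<tau> \<in> {p..q} then \<tau> else 0) integrable_on {0..3}" for p q
    unfolding integrable_restrict_Int Int_atLeastAtMost
    by (intro integrable_continuous_interval continuous_intros)
  have rel0: "rel (J_late!0) = 0"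
    by (simp add: J_late_def rel_def)
  have within: "\<tau> \<in> {0..1} \<union> {3/2..2} \<union>
      ({\<tau>\<in>{1..3/2}. s \<tau> \<noteq> Some 1} \<union> {\<tau>\<in>{2..3}. s \<tau> \<noteq> Some 2})"
    if "0 \<le> \<tau>" "\<tau> \<le> 3" "s \<tau> = Some 0" for \<tau>
    using that by auto
  have g_int: "g integrable_on {0..3}"
    unfolding g_sum by (intro integrable_add restrict_int)
  have "work s J_late 0 t \<le> integral {0..3} g"
    unfolding g_def
    by (rule work_le_if_runs_within[OF \<open>t \<le> 3\<close> negligible_Un[OF job1 job2],
          of J_late 0 s, unfolded rel0 diff_zero])
      (fact within, fact g_int[unfolded g_def])
  also have "\<dots> = integral {0..1} (\<lambda>\<tau>. \<tau> - 0) + integral {3/2..2} (\<lambda>\<tau>::real. \<tau> - 0)"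
    unfolding g_sum integral_add[OF restrict_int restrict_int] integral_restrict_Int
    by (simp add: Int_atLeastAtMost)
  also have "\<dots> < 3/2"
    by (simp only: integral_diff_const) (simp add: power2_eq_square)
  finally show False
    using completed by simp
qed

lemma online_misses_J_urgent_if_meets_J_late:
  assumes "online A" and late_met: "meets_deadlines (A J_late) J_late"
  shows "\<not> meets_deadlines (A J_urgent) J_urgent"
proof
  assume "meets_deadlines (A J_urgent) J_urgent"
  then have "negligible {\<tau>\<in>{1..3/2}. A J_urgent \<tau> \<noteq> Some 1}"
    by (rule meets_deadlines_J_urgent_runs_job1)
  moreover have "A J_late \<tau> = A J_urgent \<tau>" if "\<tau> < 3/2" for \<tau>
    by (rule \<open>online A\<close>[unfolded online_def, rule_format,
          OF job_stream_J_late job_stream_J_urgent takeWhile_J_late_eq_J_urgent[OF that]]) simp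
  then have "{\<tau>\<in>{1..3/2}. A J_late \<tau> \<noteq> Some 1} \<subseteq>
      insert (3/2) {\<tau>\<in>{1..3/2}. A J_urgent \<tau> \<noteq> Some 1}"
    by (auto simp: less_eq_real_def)
  ultimately have "negligible {\<tau>\<in>{1..3/2}. A J_late \<tau> \<noteq> Some 1}"
    by (rule negligible_subset[OF negligible_insert[THEN iffD2]])
  with meets_deadlines_J_late_idles_job1[OF late_met] show False
    by contradiction
qed

theorem theorem3:
  fixes A :: "job list \<Rightarrow> schedule"
  assumes "online A"
  shows "\<exists>J. job_stream J \<and> feasible J \<and>
           (\<exists>i<length J. completion (A J) J i > ereal (due (J!i)))"
  unfolding not_meets_deadlines_iff[symmetric]
proof (cases "meets_deadlines (A J_late) J_late")
  case True
  with assms have "\<not> meets_deadlines (A J_urgent) J_urgent"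
    by (rule online_misses_J_urgent_if_meets_J_late)
  then show "\<exists>J. job_stream J \<and> feasible J \<and> \<not> meets_deadlines (A J) J"
    using job_stream_J_urgent feasible_J_urgent by (intro exI[of _ J_urgent]) simp
next
  case False
  then show "\<exists>J. job_stream J \<and> feasible J \<and> \<not> meets_deadlines (A J) J"
    using job_stream_J_late feasible_J_late by (intro exI[of _ J_late]) simp
qed

end
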